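(* Let $G=(V,A)$ be a weighted digraph with $V=\{1,\dots,n\}$, arc weights $w_{ij}>0$ for arcs $i\to j\in A$, and every vertex of positive degree. Define, for $\mathbf{x}\in\mathbb{R}^n$, $$I^+(\mathbf{x})=\sum_{i\to j\in A} w_{ij}|x_i+x_j|,\qquad J(\mathbf{x})=\Big|\sum_{i\to j\in A} w_{ij}(x_i-x_j)\Big|=\Big|\sum_{i\in V} d_i^{\delta}x_i\Big|,\qquad N(\mathbf{x})=\min_{c\in\mathbb{R}}\sum_{i\in V} d_i|x_i-c|,$$ and, for $\mathbf{x}$ not a constant vector, $$r(\mathbf{x})=\frac{\mathrm{Vol}(V)\|\mathbf{x}\|_\infty-I^+(\mathbf{x})-J(\mathbf{x})}{2N(\mathbf{x})}.$$ Then $$\min_{\mathbf{x}\in\mathbb{R}^n\setminus\{t\mathbf{1}:\,t\in\mathbb{R}\}} r(\mathbf{x})=\min_{\emptyset\neq S\subsetneq V}\varphi_D(S).$$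
   Context: For a vertex $v$, $d_v^+$ (resp. $d_v^-$) is the sum of the weights of arcs leaving (resp. entering) $v$; $d_v=d_v^++d_v^-$ and $d_v^\delta=d_v^+-d_v^-$. For $S\subseteq V$, $\mathrm{Vol}(S)=\sum_{v\in S}d_v$ and $\bar S=V\setminus S$. $\mathrm{cut}^+(S)$ is the total weight of arcs $i\to j$ with $i\in S$, $j\notin S$, and $\mathrm{cut}^-(S)$ the total weight of arcs $i\to j$ with $i\notin S$, $j\in S$. The digraph conductance of a nonempty proper subset $S$ is $$\varphi_D(S)=\frac{\min\{\mathrm{cut}^+(S),\mathrm{cut}^-(S)\}}{\min\{\mathrm{Vol}(S),\mathrm{Vol}(\bar S)\}}.$$ $\mathbf{1}$ denotes the all-ones vector. *)

theory Defs
  imports Complex_Main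
begin

text \<open>Weighted digraph on a finite vertex type 'v, given by a weight function w;
  the arc i -> j is present iff w i j > 0.\<close>

definition outdeg :: "('v::finite \<Rightarrow> 'v \<Rightarrow> real) \<Rightarrow> 'v \<Rightarrow> real" where
  "outdeg w i = (\<Sum>j\<in>UNIV. w i j)"

definition indeg :: "('v::finite \<Rightarrow> 'v \<Rightarrow> real) \<Rightarrow> 'v \<Rightarrow> real" where
  "indeg w i = (\<Sum>j\<in>UNIV. w j i)"

definition deg :: "('v::finite \<Rightarrow> 'v \<Rightarrow> real) \<Rightarrow> 'v \<Rightarrow> real" where
  "deg w i = outdeg w i + indeg w i"

definition vol :: "('v::finite \<Rightarrow> 'v \<Rightarrow> real) \<Rightarrow> 'v set \<Rightarrow> real" where
  "vol w S = (\<Sum>i\<in>S. deg w i)"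

definition cut_out :: "('v::finite \<Rightarrow> 'v \<Rightarrow> real) \<Rightarrow> 'v set \<Rightarrow> real" where
  "cut_out w S = (\<Sum>i\<in>S. \<Sum>j\<in>UNIV - S. w i j)"

definition cut_in :: "('v::finite \<Rightarrow> 'v \<Rightarrow> real) \<Rightarrow> 'v set \<Rightarrow> real" where
  "cut_in w S = (\<Sum>i\<in>UNIV - S. \<Sum>j\<in>S. w i j)"

definition phiD :: "('v::finite \<Rightarrow> 'v \<Rightarrow> real) \<Rightarrow> 'v set \<Rightarrow> real" where
  "phiD w S = min (cut_out w S) (cut_in w S) / min (vol w S) (vol w (UNIV - S))"

definition Iplus :: "('v::finite \<Rightarrow> 'v \<Rightarrow> real) \<Rightarrow> ('v \<Rightarrow> real) \<Rightarrow> real" where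
  "Iplus w x = (\<Sum>i\<in>UNIV. \<Sum>j\<in>UNIV. w i j * \<bar>x i + x j\<bar>)"

definition Jfun :: "('v::finite \<Rightarrow> 'v \<Rightarrow> real) \<Rightarrow> ('v \<Rightarrow> real) \<Rightarrow> real" where
  "Jfun w x = \<bar>\<Sum>i\<in>UNIV. \<Sum>j\<in>UNIV. w i j * (x i - x j)\<bar>"

definition Nfun :: "('v::finite \<Rightarrow> 'v \<Rightarrow> real) \<Rightarrow> ('v \<Rightarrow> real) \<Rightarrow> real" where
  "Nfun w x = (INF c. \<Sum>i\<in>UNIV. deg w i * \<bar>x i - c\<bar>)"

definition sup_norm :: "('v::finite \<Rightarrow> real) \<Rightarrow> real" where
  "sup_norm x = Max (range (\<lambda>i. \<bar>x i\<bar>))"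

definition rfun :: "('v::finite \<Rightarrow> 'v \<Rightarrow> real) \<Rightarrow> ('v \<Rightarrow> real) \<Rightarrow> real" where
  "rfun w x = (vol w UNIV * sup_norm x - Iplus w x - Jfun w x) / (2 * Nfun w x)"

definition nonconstant :: "('v \<Rightarrow> real) \<Rightarrow> bool" where
  "nonconstant x \<longleftrightarrow> (\<nexists>t. x = (\<lambda>_. t))"

end

theory Submission
  imports Defs
begin

text \<open>Let \<open>h\<close> be the minimal conductance and call \<open>Vol(V) M - I\<^sup>+(x) - J(x)\<close> the
  numerator of \<open>x\<close> at level \<open>M \<ge> \<parallel>x\<parallel>\<^sub>\<infinity>\<close>. For a ternary vector \<open>t = 1\<^sub>U - 1\<^sub>L\<close> the
  numerator at level 1 is at least \<open>2 min(cut\<^sup>+ U, cut\<^sup>- U) + 2 min(cut\<^sup>+ L, cut\<^sup>- L)\<close>,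
  hence at least \<open>2h (min(Vol U, Vol(V - U)) + min(Vol L, Vol(V - L)))\<close>, which dominates
  \<open>2h \<Sum>\<^sub>i d\<^sub>i |t\<^sub>i - c|\<close> for one of \<open>c = 0, 1, -1\<close>.
  Every \<open>x\<close> is a positive combination \<open>\<Sum>\<^sub>k a\<^sub>k t\<^sub>k\<close> of ternary vectors with
  \<open>\<Sum>\<^sub>k a\<^sub>k = \<parallel>x\<parallel>\<^sub>\<infinity>\<close>. Since \<open>I\<^sup>+\<close>, \<open>J\<close> and the deviation \<open>\<Sum>\<^sub>i d\<^sub>i |x\<^sub>i - c|\<close> are
  subadditive and positively homogeneous while the level is additive, \<open>2h N(x)\<close> is bounded
  by the numerator of \<open>x\<close> at level \<open>\<parallel>x\<parallel>\<^sub>\<infinity>\<close> for every \<open>x\<close>, i.e. \<open>r(x) \<ge> h\<close>.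
  The \<open>\<plusminus>1\<close> vector of a set of minimal conductance attains \<open>r = h\<close>.\<close>

lemma sum_sum_indicator:
  fixes w :: "'v::finite \<Rightarrow> 'v \<Rightarrow> real"
  shows "(\<Sum>i\<in>A. \<Sum>j\<in>B. w i j) = (\<Sum>i\<in>UNIV. \<Sum>j\<in>UNIV. w i j * of_bool (i \<in> A \<and> j \<in> B))"
proof -
  have "(\<Sum>j\<in>UNIV. w i j * of_bool (i \<in> A \<and> j \<in> B)) = (\<Sum>j\<in>B. w i j) * of_bool (i \<in> A)" for i
    by (cases "i \<in> A") (simp_all add: Int_def)
  then show ?thesis by (simp add: Int_def)
qed

lemma cut_out_indicator:
  "cut_out w S = (\<Sum>i\<in>UNIV. \<Sum>j\<in>UNIV. w i j * of_bool (i \<in> S \<and> j \<notin> S))"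
  unfolding cut_out_def by (subst sum_sum_indicator) simp

lemma cut_in_indicator:
  "cut_in w S = (\<Sum>i\<in>UNIV. \<Sum>j\<in>UNIV. w i j * of_bool (i \<notin> S \<and> j \<in> S))"
  unfolding cut_in_def by (subst sum_sum_indicator) simp

lemma cut_out_Diff_UNIV: "cut_out w (UNIV - S) = cut_in w S"
  unfolding cut_out_def cut_in_def by (simp add: Diff_Diff_Int)

lemma cut_in_Diff_UNIV: "cut_in w (UNIV - S) = cut_out w S"
  unfolding cut_out_def cut_in_def by (simp add: Diff_Diff_Int)

lemma vol_UNIV: "vol w UNIV = (\<Sum>i\<in>UNIV. \<Sum>j\<in>UNIV. 2 * w i j)"
  unfolding vol_def deg_def outdeg_def indeg_def
  by (simp add: sum.distrib sum_distrib_left[symmetric] sum.swap[of "\<lambda>i j. w j i"])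

lemma vol_indicator: "vol w S = (\<Sum>i\<in>UNIV. deg w i * of_bool (i \<in> S))"
  unfolding vol_def by simp

lemma vol_Un_disjoint: "A \<inter> B = {} \<Longrightarrow> vol w (A \<union> B) = vol w A + vol w B"
  unfolding vol_def by (simp add: sum.union_disjoint)

lemma vol_pos: "(\<And>i. deg w i > 0) \<Longrightarrow> S \<noteq> {} \<Longrightarrow> vol w S > 0"
  unfolding vol_def by (simp add: sum_pos)

definition ternary_vector :: "'v set \<Rightarrow> 'v set \<Rightarrow> 'v \<Rightarrow> real" where
  "ternary_vector U L i = of_bool (i \<in> U) - of_bool (i \<in> L)"

abbreviation sign_vector :: "'v set \<Rightarrow> 'v \<Rightarrow> real" where
  "sign_vector S \<equiv> ternary_vector S (UNIV - S)"

definition deviation :: "('v::finite \<Rightarrow> 'v \<Rightarrow> real) \<Rightarrow> ('v \<Rightarrow> real) \<Rightarrow> real \<Rightarrow> real" where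
  "deviation w x c = (\<Sum>i\<in>UNIV. deg w i * \<bar>x i - c\<bar>)"

lemma Nfun_eq_INF_deviation: "Nfun w x = (INF c. deviation w x c)"
  unfolding Nfun_def deviation_def ..

lemma le_Nfun: "(\<And>c. b \<le> deviation w x c) \<Longrightarrow> b \<le> Nfun w x"
  unfolding Nfun_eq_INF_deviation by (rule cINF_greatest) simp_all

lemma Nfun_pos:
  assumes posdeg: "\<And>i. deg w i > 0" and "nonconstant x"
  shows "Nfun w x > 0"
proof -
  obtain p q where "x p \<noteq> x q"
    using \<open>nonconstant x\<close> unfolding nonconstant_def by metis
  define m where "m = min (deg w p) (deg w q)"
  have m_pos: "m > 0" using posdeg by (simp add: m_def)
  have "m * \<bar>x p - x q\<bar> \<le> deviation w x c" for c
  proof -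
    have "m * \<bar>x p - x q\<bar> \<le> m * \<bar>x p - c\<bar> + m * \<bar>x q - c\<bar>"
      using mult_left_mono[OF abs_triangle_ineq4[of "x p - c" "x q - c"], of m] m_pos
      by (simp add: algebra_simps)
    also have "\<dots> \<le> deg w p * \<bar>x p - c\<bar> + deg w q * \<bar>x q - c\<bar>"
      by (intro add_mono mult_right_mono) (simp_all add: m_def)
    also have "\<dots> = (\<Sum>i\<in>{p, q}. deg w i * \<bar>x i - c\<bar>)"
      using \<open>x p \<noteq> x q\<close> by (cases "p = q") auto
    also have "\<dots> \<le> deviation w x c"
      unfolding deviation_def by (rule sum_mono2) (simp_all add: less_imp_le posdeg)
    finally show ?thesis .
  qed
  then have "m * \<bar>x p - x q\<bar> \<le> Nfun w x" by (rule le_Nfun)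
  moreover have "m * \<bar>x p - x q\<bar> > 0"
    using m_pos \<open>x p \<noteq> x q\<close> by simp
  ultimately show ?thesis by linarith
qed

lemma Iplus_ternary_vector:
  fixes w :: "'v::finite \<Rightarrow> 'v \<Rightarrow> real"
  assumes "U \<inter> L = {}"
  defines "Z \<equiv> UNIV - (U \<union> L)"
  shows "Iplus w (ternary_vector U L) = vol w UNIV
           - (cut_out w U + cut_in w U + cut_out w L + cut_in w L) - 2 * (\<Sum>i\<in>Z. \<Sum>j\<in>Z. w i j)"
proof -
  have "w i j * \<bar>ternary_vector U L i + ternary_vector U L j\<bar> = 2 * w i j
      - (w i j * of_bool (i \<in> U \<and> j \<notin> U) + w i j * of_bool (i \<notin> U \<and> j \<in> U)
         + w i j * of_bool (i \<in> L \<and> j \<notin> L) + w i j * of_bool (i \<notin> L \<and> j \<in> L))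
      - 2 * (w i j * of_bool (i \<in> Z \<and> j \<in> Z))" for i j
    using assms by (auto simp: ternary_vector_def)
  then show ?thesis
    unfolding Iplus_def vol_UNIV cut_out_indicator cut_in_indicator sum_sum_indicator[of _ Z Z]
    by (simp only: sum.distrib sum_subtractf sum_distrib_left)
qed

lemma arc_flow_ternary_vector:
  "(\<Sum>i\<in>UNIV. \<Sum>j\<in>UNIV. w i j * (ternary_vector U L i - ternary_vector U L j))
     = (cut_out w U - cut_in w U) - (cut_out w L - cut_in w L)"
proof -
  have "w i j * (ternary_vector U L i - ternary_vector U L j)
      = (w i j * of_bool (i \<in> U \<and> j \<notin> U) - w i j * of_bool (i \<notin> U \<and> j \<in> U))
        - (w i j * of_bool (i \<in> L \<and> j \<notin> L) - w i j * of_bool (i \<notin> L \<and> j \<in> L))" for i j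
    by (auto simp: ternary_vector_def algebra_simps)
  then show ?thesis
    unfolding cut_out_indicator cut_in_indicator by (simp add: sum_subtractf)
qed

lemma deviation_ternary_vector:
  assumes "U \<inter> L = {}"
  shows "deviation w (ternary_vector U L) c
    = vol w U * \<bar>1 - c\<bar> + vol w L * \<bar>1 + c\<bar> + vol w (UNIV - (U \<union> L)) * \<bar>c\<bar>"
proof -
  have "deg w i * \<bar>ternary_vector U L i - c\<bar> = deg w i * of_bool (i \<in> U) * \<bar>1 - c\<bar>
      + deg w i * of_bool (i \<in> L) * \<bar>1 + c\<bar> + deg w i * of_bool (i \<in> UNIV - (U \<union> L)) * \<bar>c\<bar>" for i
    using assms by (auto simp: ternary_vector_def)
  then show ?thesis
    unfolding deviation_def vol_indicator by (simp only: sum.distrib sum_distrib_right)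
qed

lemma Jfun_scale: "Jfun w (\<lambda>i. a * x i) = \<bar>a\<bar> * Jfun w x"
proof -
  have "(\<Sum>i\<in>UNIV. \<Sum>j\<in>UNIV. w i j * (a * x i - a * x j))
      = a * (\<Sum>i\<in>UNIV. \<Sum>j\<in>UNIV. w i j * (x i - x j))"
    unfolding sum_distrib_left by (intro sum.cong refl) (simp add: algebra_simps)
  then show ?thesis unfolding Jfun_def by (simp add: abs_mult)
qed

lemma Jfun_add_le: "Jfun w (\<lambda>i. x i + y i) \<le> Jfun w x + Jfun w y"
proof -
  have "(\<Sum>i\<in>UNIV. \<Sum>j\<in>UNIV. w i j * (x i + y i - (x j + y j))) =
     (\<Sum>i\<in>UNIV. \<Sum>j\<in>UNIV. w i j * (x i - x j)) + (\<Sum>i\<in>UNIV. \<Sum>j\<in>UNIV. w i j * (y i - y j))"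
    unfolding sum.distrib[symmetric] by (intro sum.cong refl) (simp add: algebra_simps)
  then show ?thesis unfolding Jfun_def by (simp add: abs_triangle_ineq)
qed

lemma deviation_scale: "deviation w (\<lambda>i. a * x i) (a * c) = \<bar>a\<bar> * deviation w x c"
  unfolding deviation_def sum_distrib_left
  by (intro sum.cong refl) (simp add: right_diff_distrib[symmetric] abs_mult)

text \<open>The induction peels off the smallest nonzero \<open>|x\<^sub>i|\<close>: subtracting it times the sign
  pattern of \<open>x\<close> shrinks the support and lowers the level by the same amount.\<close>

lemma ternary_vector_induct [consumes 1, case_names zero ternary add]:
  fixes x :: "'v::finite \<Rightarrow> real"
  assumes "\<And>i. \<bar>x i\<bar> \<le> M"
    and zero: "\<And>M. 0 \<le> M \<Longrightarrow> P (\<lambda>_. 0) M"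
    and ternary: "\<And>a U L. 0 < a \<Longrightarrow> U \<inter> L = {} \<Longrightarrow> P (\<lambda>i. a * ternary_vector U L i) a"
    and add: "\<And>x y M N. P x M \<Longrightarrow> P y N \<Longrightarrow> P (\<lambda>i. x i + y i) (M + N)"
  shows "P x M"
  using assms(1)
proof (induction "card {i. x i \<noteq> 0}" arbitrary: x M rule: less_induct)
  case less
  show ?case
  proof (cases "\<forall>i. x i = 0")
    case True
    then have "x = (\<lambda>_. 0)" by auto
    moreover have "0 \<le> M" using less.prems[of undefined] by linarith
    ultimately show ?thesis using zero by simp
  next
    case False
    define a where "a = Min ((\<lambda>i. \<bar>x i\<bar>) ` {i. x i \<noteq> 0})"
    have a_le: "a \<le> \<bar>x i\<bar>" if "x i \<noteq> 0" for i
      unfolding a_def using that by simp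
    have "a \<in> (\<lambda>i. \<bar>x i\<bar>) ` {i. x i \<noteq> 0}"
      unfolding a_def using False by (intro Min_in) auto
    then obtain k where k: "x k \<noteq> 0" "a = \<bar>x k\<bar>" by blast
    define s where "s = ternary_vector {i. x i > 0} {i. x i < 0}"
    define y where "y i = x i - a * s i" for i
    have "\<bar>y i\<bar> \<le> M - a" for i
      using a_le[of i] less.prems[of i] less.prems[of k] k
      by (cases "x i = 0") (auto simp: y_def s_def ternary_vector_def)
    moreover have "{i. y i \<noteq> 0} \<subset> {i. x i \<noteq> 0}"
    proof
      show "{i. y i \<noteq> 0} \<subseteq> {i. x i \<noteq> 0}"
        by (auto simp: y_def s_def ternary_vector_def)
      have "y k = 0"
        using k by (auto simp: y_def s_def ternary_vector_def)
      with k show "{i. y i \<noteq> 0} \<noteq> {i. x i \<noteq> 0}" by blast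
    qed
    then have "card {i. y i \<noteq> 0} < card {i. x i \<noteq> 0}"
      by (simp add: psubset_card_mono)
    ultimately have "P y (M - a)" using less.hyps by blast
    have "P (\<lambda>i. a * s i) a"
      unfolding s_def using k by (intro ternary) auto
    from this \<open>P y (M - a)\<close> have "P (\<lambda>i. a * s i + y i) (a + (M - a))" by (rule add)
    then show ?thesis by (simp add: y_def)
  qed
qed

lemma nonconstant_sign_vector:
  assumes "S \<noteq> {}" and "S \<noteq> UNIV"
  shows "nonconstant (sign_vector S)"
proof -
  obtain p q where "p \<in> S" "q \<notin> S" using assms by blast
  then have "sign_vector S p \<noteq> sign_vector S q"
    by (simp add: ternary_vector_def)
  then show ?thesis unfolding nonconstant_def by metis
qed

lemma sup_norm_sign_vector: "sup_norm (sign_vector S) = 1"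
proof -
  have "range (\<lambda>i. \<bar>sign_vector S i\<bar>) = {1}"
    by (auto simp: ternary_vector_def)
  then show ?thesis unfolding sup_norm_def by simp
qed

lemma numerator_sign_vector:
  "vol w UNIV * sup_norm (sign_vector S)
     - Iplus w (sign_vector S) - Jfun w (sign_vector S)
   = 4 * min (cut_out w S) (cut_in w S)"
  using Iplus_ternary_vector[of S "UNIV - S" w] arc_flow_ternary_vector[of w S "UNIV - S"]
  unfolding sup_norm_sign_vector Jfun_def
  by (simp add: cut_out_Diff_UNIV cut_in_Diff_UNIV)

lemma deviation_sign_vector:
  "deviation w (sign_vector S) c = vol w S * \<bar>1 - c\<bar> + vol w (UNIV - S) * \<bar>1 + c\<bar>"
  using deviation_ternary_vector[of S "UNIV - S" w c] by (simp add: vol_def)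

context
  fixes w :: "'v::finite \<Rightarrow> 'v \<Rightarrow> real"
  assumes nonneg: "\<And>i j. w i j \<ge> 0"
begin

lemma deg_nonneg: "deg w i \<ge> 0"
  unfolding deg_def outdeg_def indeg_def by (simp add: sum_nonneg nonneg)

lemma vol_nonneg: "vol w S \<ge> 0"
  unfolding vol_def by (simp add: sum_nonneg deg_nonneg)

lemma cut_out_nonneg: "cut_out w S \<ge> 0"
  unfolding cut_out_def by (simp add: sum_nonneg nonneg)

lemma cut_in_nonneg: "cut_in w S \<ge> 0"
  unfolding cut_in_def by (simp add: sum_nonneg nonneg)

lemma phiD_nonneg: "phiD w S \<ge> 0"
  unfolding phiD_def by (simp add: cut_out_nonneg cut_in_nonneg vol_nonneg)

lemma Nfun_le_deviation: "Nfun w x \<le> deviation w x c"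
  unfolding Nfun_eq_INF_deviation
  by (rule cINF_lower) (auto intro!: bdd_belowI[of _ 0] sum_nonneg simp: deviation_def deg_nonneg)

lemma Iplus_scale: "Iplus w (\<lambda>i. a * x i) = \<bar>a\<bar> * Iplus w x"
  unfolding Iplus_def sum_distrib_left
  by (intro sum.cong refl) (simp add: distrib_left[symmetric] abs_mult nonneg)

lemma Iplus_add_le: "Iplus w (\<lambda>i. x i + y i) \<le> Iplus w x + Iplus w y"
proof -
  have "w i j * \<bar>x i + y i + (x j + y j)\<bar> \<le> w i j * \<bar>x i + x j\<bar> + w i j * \<bar>y i + y j\<bar>" for i j
    using mult_left_mono[OF abs_triangle_ineq[of "x i + x j" "y i + y j"] nonneg[of i j]]
    by (simp add: algebra_simps)
  then show ?thesis unfolding Iplus_def sum.distrib[symmetric] by (intro sum_mono)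
qed

lemma deviation_add_le: "deviation w (\<lambda>i. x i + y i) (c + d) \<le> deviation w x c + deviation w y d"
proof -
  have "deg w i * \<bar>x i + y i - (c + d)\<bar> \<le> deg w i * \<bar>x i - c\<bar> + deg w i * \<bar>y i - d\<bar>" for i
    using mult_left_mono[OF abs_triangle_ineq[of "x i - c" "y i - d"] deg_nonneg[of i]]
    by (simp add: algebra_simps)
  then show ?thesis unfolding deviation_def sum.distrib[symmetric] by (intro sum_mono)
qed

lemma numerator_ternary_vector_ge:
  assumes "U \<inter> L = {}"
  shows "2 * min (cut_out w U) (cut_in w U) + 2 * min (cut_out w L) (cut_in w L)
     \<le> vol w UNIV - Iplus w (ternary_vector U L) - Jfun w (ternary_vector U L)"
proof -
  have "0 \<le> (\<Sum>i\<in>UNIV - (U \<union> L). \<Sum>j\<in>UNIV - (U \<union> L). w i j)"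
    by (simp add: sum_nonneg nonneg)
  then show ?thesis
    unfolding Iplus_ternary_vector[OF assms] Jfun_def arc_flow_ternary_vector by linarith
qed

lemma deviation_ternary_vector_le:
  assumes "U \<inter> L = {}"
  shows "\<exists>c. deviation w (ternary_vector U L) c
     \<le> min (vol w U) (vol w (UNIV - U)) + min (vol w L) (vol w (UNIV - L))"
    (is "\<exists>c. deviation w ?t c \<le> ?B")
proof -
  define Z where "Z = UNIV - (U \<union> L)"
  have "UNIV - U = L \<union> Z" "L \<inter> Z = {}" "UNIV - L = U \<union> Z" "U \<inter> Z = {}"
    using assms by (auto simp: Z_def)
  then have "vol w (UNIV - U) = vol w L + vol w Z" "vol w (UNIV - L) = vol w U + vol w Z"
    by (simp_all add: vol_Un_disjoint)
  moreover have "vol w Z \<ge> 0" by (rule vol_nonneg)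
  moreover note deviation_ternary_vector[OF assms, folded Z_def]
  ultimately consider "deviation w ?t 0 \<le> ?B" | "deviation w ?t 1 \<le> ?B" | "deviation w ?t (-1) \<le> ?B"
    by fastforce
  then show ?thesis by metis
qed

lemma Nfun_sign_vector:
  "Nfun w (sign_vector S) = 2 * min (vol w S) (vol w (UNIV - S))"
proof (rule antisym)
  have "Nfun w (sign_vector S) \<le> deviation w (sign_vector S) c" for c
    by (rule Nfun_le_deviation)
  from this[of 1] this[of "-1"]
  show "Nfun w (sign_vector S) \<le> 2 * min (vol w S) (vol w (UNIV - S))"
    unfolding deviation_sign_vector by (simp add: min_def)
next
  let ?m = "min (vol w S) (vol w (UNIV - S))"
  show "2 * ?m \<le> Nfun w (sign_vector S)"
  proof (rule le_Nfun)
    fix c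
    have "2 * ?m \<le> ?m * \<bar>1 - c\<bar> + ?m * \<bar>1 + c\<bar>"
      using mult_left_mono[of 2 "\<bar>1 - c\<bar> + \<bar>1 + c\<bar>" ?m] vol_nonneg[of S] vol_nonneg[of "UNIV - S"]
      by (simp add: algebra_simps)
    also have "\<dots> \<le> deviation w (sign_vector S) c"
      unfolding deviation_sign_vector by (intro add_mono mult_right_mono) simp_all
    finally show "2 * ?m \<le> deviation w (sign_vector S) c" .
  qed
qed

lemma rfun_sign_vector: "rfun w (sign_vector S) = phiD w S"
  unfolding rfun_def phiD_def numerator_sign_vector Nfun_sign_vector by simp

lemma cut_ge_of_phiD_ge:
  assumes posdeg: "\<And>i. deg w i > 0"
    and phiD_ge: "\<And>S. S \<noteq> {} \<Longrightarrow> S \<noteq> UNIV \<Longrightarrow> h \<le> phiD w S"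
  shows "h * min (vol w S) (vol w (UNIV - S)) \<le> min (cut_out w S) (cut_in w S)"
proof (cases "S = {} \<or> S = UNIV")
  case True
  then have "min (vol w S) (vol w (UNIV - S)) = 0"
    using vol_nonneg[of UNIV] by (auto simp: vol_def)
  then show ?thesis by (simp add: cut_out_nonneg cut_in_nonneg)
next
  case False
  then have "min (vol w S) (vol w (UNIV - S)) > 0"
    using vol_pos[OF posdeg, of S] vol_pos[OF posdeg, of "UNIV - S"] by auto
  with phiD_ge[of S] False show ?thesis
    unfolding phiD_def by (simp add: pos_le_divide_eq)
qed

context
  fixes h :: real
  assumes h_nonneg: "0 \<le> h"
    and cut_ge: "\<And>S. h * min (vol w S) (vol w (UNIV - S)) \<le> min (cut_out w S) (cut_in w S)"
begin

lemma deviation_ternary_vector_bound: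
  assumes "U \<inter> L = {}"
  shows "\<exists>c. 2 * h * deviation w (ternary_vector U L) c
    \<le> vol w UNIV - Iplus w (ternary_vector U L) - Jfun w (ternary_vector U L)"
proof -
  obtain c where c: "deviation w (ternary_vector U L) c
      \<le> min (vol w U) (vol w (UNIV - U)) + min (vol w L) (vol w (UNIV - L))"
    using deviation_ternary_vector_le[OF assms] by blast
  have "2 * h * deviation w (ternary_vector U L) c
      \<le> 2 * (h * min (vol w U) (vol w (UNIV - U))) + 2 * (h * min (vol w L) (vol w (UNIV - L)))"
    using mult_left_mono[OF c, of "2 * h"] h_nonneg by (simp add: algebra_simps)
  also have "\<dots> \<le> 2 * min (cut_out w U) (cut_in w U) + 2 * min (cut_out w L) (cut_in w L)"
    using cut_ge[of U] cut_ge[of L] by linarith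
  also have "\<dots> \<le> vol w UNIV - Iplus w (ternary_vector U L) - Jfun w (ternary_vector U L)"
    by (rule numerator_ternary_vector_ge[OF assms])
  finally show ?thesis ..
qed

lemma deviation_numerator_bound:
  assumes "\<And>i. \<bar>x i\<bar> \<le> M"
  shows "\<exists>c. 2 * h * deviation w x c \<le> vol w UNIV * M - Iplus w x - Jfun w x"
  using assms
proof (induction x M rule: ternary_vector_induct)
  case (zero M)
  then show ?case
    by (intro exI[of _ 0]) (simp add: deviation_def Iplus_def Jfun_def vol_nonneg)
next
  case (ternary a U L)
  then obtain c where "2 * h * deviation w (ternary_vector U L) c
      \<le> vol w UNIV - Iplus w (ternary_vector U L) - Jfun w (ternary_vector U L)"
    using deviation_ternary_vector_bound by blast
  from mult_left_mono[OF this, of a] \<open>0 < a\<close> show ?case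
    by (intro exI[of _ "a * c"]) (simp add: deviation_scale Iplus_scale Jfun_scale algebra_simps)
next
  case (add x y M N)
  then obtain c d where
    "2 * h * deviation w x c \<le> vol w UNIV * M - Iplus w x - Jfun w x"
    "2 * h * deviation w y d \<le> vol w UNIV * N - Iplus w y - Jfun w y"
    by blast
  moreover have "2 * h * deviation w (\<lambda>i. x i + y i) (c + d)
      \<le> 2 * h * deviation w x c + 2 * h * deviation w y d"
    using mult_left_mono[OF deviation_add_le, of "2 * h"] h_nonneg by (simp add: algebra_simps)
  moreover note Iplus_add_le[of x y] Jfun_add_le[of w x y]
  ultimately show ?case
    by (intro exI[of _ "c + d"]) (simp add: algebra_simps)
qed

lemma Nfun_numerator_bound: "2 * h * Nfun w x \<le> vol w UNIV * sup_norm x - Iplus w x - Jfun w x"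
proof -
  have "\<bar>x i\<bar> \<le> sup_norm x" for i
    unfolding sup_norm_def by simp
  then obtain c where "2 * h * deviation w x c \<le> vol w UNIV * sup_norm x - Iplus w x - Jfun w x"
    using deviation_numerator_bound by blast
  moreover have "2 * h * Nfun w x \<le> 2 * h * deviation w x c"
    using Nfun_le_deviation h_nonneg by (simp add: mult_left_mono)
  ultimately show ?thesis by linarith
qed

lemma rfun_ge:
  assumes "\<And>i. deg w i > 0" and "nonconstant x"
  shows "h \<le> rfun w x"
  using Nfun_numerator_bound[of x] Nfun_pos[OF assms]
  unfolding rfun_def by (simp add: pos_le_divide_eq mult.commute mult.left_commute)

end

end

lemma ex_proper_subset:
  fixes w :: "'v::finite \<Rightarrow> 'v \<Rightarrow> real"
  assumes "\<And>i. w i i = 0" and "\<And>i. deg w i > 0"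
  shows "\<exists>S::'v set. S \<noteq> {} \<and> S \<noteq> UNIV"
proof -
  fix i :: 'v
  have "{i} \<noteq> UNIV"
  proof
    assume "{i} = UNIV"
    have "deg w i = 0"
      using assms(1) by (simp add: deg_def outdeg_def indeg_def flip: \<open>{i} = UNIV\<close>)
    with assms(2) show False by (metis less_irrefl)
  qed
  then show ?thesis by blast
qed

theorem mainTheorem1:
  fixes w :: "'v::finite \<Rightarrow> 'v \<Rightarrow> real"
  assumes nonneg: "\<And>i j. w i j \<ge> 0"
    and noloop: "\<And>i. w i i = 0"
    and posdeg: "\<And>i. deg w i > 0"
  shows "(\<exists>x. nonconstant x \<and>
            rfun w x = Min (phiD w ` {S. S \<noteq> {} \<and> S \<noteq> UNIV}))
       \<and> (\<forall>x. nonconstant x \<longrightarrow>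
            Min (phiD w ` {S. S \<noteq> {} \<and> S \<noteq> UNIV}) \<le> rfun w x)"
proof -
  define h where "h = Min (phiD w ` {S. S \<noteq> {} \<and> S \<noteq> UNIV})"
  have "h \<in> phiD w ` {S. S \<noteq> {} \<and> S \<noteq> UNIV}"
    unfolding h_def using ex_proper_subset[OF noloop posdeg] by (intro Min_in) auto
  then obtain S where S: "S \<noteq> {}" "S \<noteq> UNIV" "phiD w S = h" by blast
  have h_le: "h \<le> phiD w T" if "T \<noteq> {}" "T \<noteq> UNIV" for T
    unfolding h_def using that by simp
  have h_nonneg: "0 \<le> h"
    using phiD_nonneg[of w S, OF nonneg] S(3) by simp
  have cut_ge: "h * min (vol w T) (vol w (UNIV - T)) \<le> min (cut_out w T) (cut_in w T)" for T
    by (rule cut_ge_of_phiD_ge[of w, OF nonneg posdeg h_le])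
  have "h \<le> rfun w x" if "nonconstant x" for x
    by (rule rfun_ge[of w, OF nonneg h_nonneg cut_ge posdeg that])
  moreover have "nonconstant (sign_vector S)"
    "rfun w (sign_vector S) = h"
    using nonconstant_sign_vector[OF S(1,2)] rfun_sign_vector[of w, OF nonneg] S(3)
    by simp_all
  ultimately show ?thesis unfolding h_def by blast
qed

end
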